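(* Let $X \ge 1$. Let $P \subseteq \{1,\dots,X\}$ be an arithmetic progression of length $\ge X^{3/4}$. Let $\mathcal{Q}$ be a set of pairwise coprime positive integers with $\prod_{q \in \mathcal{Q}} q \ge X^{5/4}$, and suppose the common difference of $P$ is coprime to every $q \in \mathcal{Q}$. Let $S \subseteq \mathcal{Q}$ satisfy $(\max_{q \in \mathcal{Q}} q)^{|S|} \le X^{1/4}$, and let $T \subseteq S$. Let $a \in G_S$. Put $\mathcal{Q}' := \mathcal{Q} \setminus S$ and $P' := \{ x \in P : x \equiv a \pmod{\prod_{q \in S \setminus T} q}\}$ (where $a$ is reduced to a residue class modulo $\prod_{q\in S\setminus T}q$ via the Chinese remainder theorem). Then the lift $\Psi_{P',\mathcal{Q}'}$ is well-defined, and there is a real number $\eta$ with $|\eta| \le X^{-1/2}$ such that for every $f \in B(P)$, \[ \sigma_{S\to a}\, E_T\, \Psi_{P,\mathcal{Q}} f = (1+\eta)\, \Psi_{P',\mathcal{Q}'}\big(f|_{P'}\big). \]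
   Context: For a finite set $\Sigma$, $B(\Sigma)$ denotes the space of functions $\Sigma\to\mathbb{C}$. For a set $\mathcal{R}$ of pairwise coprime positive integers, $G_{\mathcal{R}} := \prod_{q\in\mathcal{R}} \mathbb{Z}/q\mathbb{Z}\cong \mathbb{Z}/(\prod_{q\in\mathcal{R}}q)\mathbb{Z}$ (Chinese remainder theorem), and $\pi_{\mathcal{R}}:\mathbb{Z}\to G_{\mathcal{R}}$ is the natural projection. Characters of $G_{\mathcal{Q}}$ are identified with $\xi=\sum_{q\in\mathcal{Q}}\xi_q/q \in \bigoplus_{q\in\mathcal{Q}}(\frac1q\mathbb{Z}/\mathbb{Z})$, acting as $x\mapsto e(\xi x)$, $e(t)=e^{2\pi i t}$; Fourier coefficients are $\widehat{g}(\xi)=\mathbb{E}_{x\in G_{\mathcal{Q}}}g(x)\overline{e(\xi x)}$ so that $g=\sum_\xi \widehat g(\xi)e(\xi\cdot)$. For $T\subseteq\mathcal{Q}$, the averaging operator $E_T$ on $B(G_{\mathcal{Q}})$ is the Fourier multiplier $E_T e(\xi\cdot)=w(\xi)e(\xi\cdot)$ with $w(\xi)=1$ if $\xi_q=0$ for all $q\in T$ and $w(\xi)=0$ otherwise. For $S\subseteq\mathcal{Q}$ and $a\in G_S$, identify $G_{\mathcal{Q}}=G_S\times G_{\mathcal{Q}\setminus S}$ and define the specialisation $\sigma_{S\to a}:B(G_{\mathcal{Q}})\to B(G_{\mathcal{Q}\setminus S})$ by $(\sigma_{S\to a}g)(y)=g(a,y)$. Lifting: if $\mathcal{R}$ is a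 set of pairwise coprime positive integers with $\prod_{q\in\mathcal{R}}q\ge X$ and $P\subseteq\{1,\dots,X\}$ is an arithmetic progression whose common difference is coprime to all $q\in\mathcal{R}$, then $\Psi_{P,\mathcal{R}}:B(P)\to B(G_{\mathcal{R}})$ is defined by $(\Psi_{P,\mathcal{R}}f)(\pi_{\mathcal{R}}(x)) = |P|^{-1}|G_{\mathcal{R}}|f(x)$ for $x\in P$, and $\Psi_{P,\mathcal{R}}f=0$ off $\pi_{\mathcal{R}}(P)$ (this is well-defined since $\pi_{\mathcal{R}}$ is injective on $P$). *)

theory Defs
  imports "HOL-Analysis.Analysis" "HOL-Library.FuncSet"
begin

text \<open>Elements of G_R = prod_{q in R} Z/qZ are represented as extensional functions
  g with g q in {0..<q} for q in R (and g q = undefined outside R).\<close>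
definition Grp :: "nat set \<Rightarrow> (nat \<Rightarrow> nat) set" where
  "Grp R = (\<Pi>\<^sub>E q\<in>R. {..<q})"

definition proj :: "nat set \<Rightarrow> int \<Rightarrow> (nat \<Rightarrow> nat)" where
  "proj R x = restrict (\<lambda>q. nat (x mod int q)) R"

text \<open>e(xi x) for a character xi (also an element of G_Q) and x in G_Q.\<close>
definition echar :: "nat set \<Rightarrow> (nat \<Rightarrow> nat) \<Rightarrow> (nat \<Rightarrow> nat) \<Rightarrow> complex" where
  "echar Q \<xi> x = exp (2 * of_real pi * \<i> * of_real (\<Sum>q\<in>Q. real (\<xi> q * x q) / real q))"

definition fourier :: "nat set \<Rightarrow> ((nat \<Rightarrow> nat) \<Rightarrow> complex) \<Rightarrow> (nat \<Rightarrow> nat) \<Rightarrow> complex" where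
  "fourier Q g \<xi> = (\<Sum>x\<in>Grp Q. g x * cnj (echar Q \<xi> x)) / of_nat (card (Grp Q))"

text \<open>Averaging operator E_T as a Fourier multiplier.\<close>
definition avgE :: "nat set \<Rightarrow> nat set \<Rightarrow> ((nat \<Rightarrow> nat) \<Rightarrow> complex) \<Rightarrow> (nat \<Rightarrow> nat) \<Rightarrow> complex" where
  "avgE Q T g x = (\<Sum>\<xi>\<in>{\<xi>\<in>Grp Q. \<forall>q\<in>T. \<xi> q = 0}. fourier Q g \<xi> * echar Q \<xi> x)"

definition specialise :: "nat set \<Rightarrow> (nat \<Rightarrow> nat) \<Rightarrow> ((nat \<Rightarrow> nat) \<Rightarrow> complex) \<Rightarrow> (nat \<Rightarrow> nat) \<Rightarrow> complex" where
  "specialise S a g y = g (\<lambda>q. if q \<in> S then a q else y q)"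

definition lift :: "int set \<Rightarrow> nat set \<Rightarrow> (int \<Rightarrow> complex) \<Rightarrow> (nat \<Rightarrow> nat) \<Rightarrow> complex" where
  "lift P R f g = (if \<exists>x\<in>P. proj R x = g
     then of_real (real (card (Grp R)) / real (card P)) * f (THE x. x \<in> P \<and> proj R x = g)
     else 0)"

definition arith_prog :: "int set \<Rightarrow> int \<Rightarrow> bool" where
  "arith_prog P d \<longleftrightarrow> d > 0 \<and> (\<exists>b (n::nat). n \<ge> 1 \<and> P = {b + d * int k | k. k < n})"

end

theory Submission
  imports Defs "HOL-Number_Theory.Cong"
begin

text \<open>
  By orthogonality of characters, E_T averages over the T-coordinates, so
  sigma_{S->a} E_T Psi_{P,Q} f at y is a normalised sum of f over those x in P whose
  residues agree with a on S - T and with y on Q - S. By the Chinese remainder theorem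
  the first condition is a single residue class modulo m = prod (S - T); as the common
  difference of P is prime to m, it cuts out of P a progression P' with
  |m |P'| - |P|| < m. The two normalisations thus differ by the factor
  m |P'| / |P| = 1 + eta, and m <= X^(1/4), |P| >= X^(3/4) give |eta| <= X^(-1/2).
  The projections are injective on P and P' because prod (Q - S) >= X exceeds the
  diameter of {1..X}.
\<close>

lemma sum_roots_of_unity_eq_0:
  fixes q :: nat and r :: int
  assumes "q > 0" "\<not> int q dvd r"
  shows "(\<Sum>k<q. exp (2 * of_real pi * \<i> * of_real (real k * real_of_int r / real q))) = (0::complex)"
proof -
  define w where "w = exp (2 * of_real pi * \<i> * of_real (real_of_int r / real q))"
  have powers: "exp (2 * of_real pi * \<i> * of_real (real k * real_of_int r / real q)) = w ^ k" for k
    unfolding w_def exp_of_nat_mult[symmetric] by (simp add: mult_ac)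
  have "w \<noteq> 1"
  proof
    assume "w = 1"
    then obtain j :: int where "real_of_int r / real q * pi * 2 = of_int (2 * j) * pi"
      unfolding w_def exp_eq_1 by (auto simp: mult_ac)
    hence "real_of_int r = real_of_int (int q * j)" using assms(1) by (simp add: field_simps)
    hence "r = int q * j" by linarith
    thus False using assms(2) by simp
  qed
  moreover have "w ^ q = 1"
  proof -
    have "of_nat q * (2 * of_real pi * \<i> * of_real (real_of_int r / real q)) =
        2 * of_real pi * \<i> * of_int r"
      using assms(1) by (simp add: field_simps)
    thus ?thesis unfolding w_def exp_of_nat_mult[symmetric] exp_eq_1 by (auto intro: exI[of _ r])
  qed
  ultimately show ?thesis unfolding powers by (simp add: geometric_sum)
qed

lemma echar_eq_prod:
  assumes "finite Q"
  shows "echar Q \<xi> x = (\<Prod>q\<in>Q. exp (2 * of_real pi * \<i> * of_real (real (\<xi> q * x q) / real q)))"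
  unfolding echar_def of_real_sum sum_distrib_left using assms by (simp add: exp_sum)

lemma cnj_exp_mult_exp:
  fixes q k u v :: nat
  shows "cnj (exp (2 * of_real pi * \<i> * of_real (real (k * v) / real q))) *
         exp (2 * of_real pi * \<i> * of_real (real (k * u) / real q)) =
         exp (2 * of_real pi * \<i> * of_real (real k * real_of_int (int u - int v) / real q))"
  by (simp add: exp_cnj exp_add[symmetric] algebra_simps diff_divide_distrib)

lemma card_Grp: "finite R \<Longrightarrow> card (Grp R) = \<Prod>R"
  unfolding Grp_def by (simp add: card_PiE)

lemma finite_Grp: "finite R \<Longrightarrow> finite (Grp R)"
  unfolding Grp_def by (simp add: finite_PiE)

lemma Grp_vanishing_on_eq_PiE:
  assumes "\<forall>q\<in>Q. q > 0" "T \<subseteq> Q"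
  shows "{\<xi>\<in>Grp Q. \<forall>q\<in>T. \<xi> q = 0} = (\<Pi>\<^sub>E q\<in>Q. if q \<in> T then {0} else {..<q})"
  using assms unfolding Grp_def by (auto simp: PiE_iff extensional_def split: if_splits)

lemma sum_echar_vanishing_on:
  assumes fin: "finite Q" and pos: "\<forall>q\<in>Q. q > 0" and TQ: "T \<subseteq> Q"
    and x: "x \<in> Grp Q" and z: "z \<in> Grp Q"
  shows "(\<Sum>\<xi>\<in>{\<xi>\<in>Grp Q. \<forall>q\<in>T. \<xi> q = 0}. cnj (echar Q \<xi> z) * echar Q \<xi> x)
       = (if \<forall>q\<in>Q-T. z q = x q then of_nat (\<Prod>(Q-T)) else 0)"
proof -
  define h where
    "h q k = exp (2 * of_real pi * \<i> * of_real (real k * real_of_int (int (x q) - int (z q)) / real q))"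
    for q k :: nat
  have factor: "(\<Sum>k\<in>(if q \<in> T then {0} else {..<q}). h q k) =
      (if q \<in> T then 1 else if z q = x q then of_nat q else 0)" if "q \<in> Q" for q
  proof (cases "q \<in> T \<or> z q = x q")
    case True thus ?thesis by (auto simp: h_def)
  next
    case False
    have "x q < q" "z q < q" using x z \<open>q \<in> Q\<close> unfolding Grp_def by (auto simp: PiE_iff)
    hence "\<not> int q dvd (int (x q) - int (z q))"
      using False dvd_imp_le_int[of "int (x q) - int (z q)" "int q"] by auto
    hence "(\<Sum>k<q. h q k) = 0"
      unfolding h_def using pos \<open>q \<in> Q\<close> by (intro sum_roots_of_unity_eq_0) auto
    thus ?thesis using False by simp
  qed
  have "(\<Sum>\<xi>\<in>{\<xi>\<in>Grp Q. \<forall>q\<in>T. \<xi> q = 0}. cnj (echar Q \<xi> z) * echar Q \<xi> x)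
      = (\<Sum>\<xi>\<in>(\<Pi>\<^sub>E q\<in>Q. if q \<in> T then {0} else {..<q}). \<Prod>q\<in>Q. h q (\<xi> q))"
    unfolding Grp_vanishing_on_eq_PiE[OF pos TQ] echar_eq_prod[OF fin] cnj_prod
      prod.distrib[symmetric] h_def cnj_exp_mult_exp ..
  also have "\<dots> = (\<Prod>q\<in>Q. \<Sum>k\<in>(if q \<in> T then {0} else {..<q}). h q k)"
    by (rule prod_sum_PiE[symmetric]) (use fin in auto)
  also have "\<dots> = (\<Prod>q\<in>Q-T. if z q = x q then of_nat q else 0)"
    using fin TQ by (simp add: factor prod.If_cases Int_absorb2 Diff_eq)
  also have "\<dots> = (if \<forall>q\<in>Q-T. z q = x q then of_nat (\<Prod>(Q-T)) else 0)"
    using fin by auto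
  finally show ?thesis .
qed

lemma avgE_eq_fibre_mean:
  assumes fin: "finite Q" and pos: "\<forall>q\<in>Q. q > 0" and TQ: "T \<subseteq> Q" and x: "x \<in> Grp Q"
  shows "avgE Q T g x = (\<Sum>z\<in>{z\<in>Grp Q. \<forall>q\<in>Q-T. z q = x q}. g z) / of_nat (\<Prod>T)"
proof -
  let ?X = "{\<xi>\<in>Grp Q. \<forall>q\<in>T. \<xi> q = 0}"
  let ?N = "of_nat (card (Grp Q)) :: complex"
  have "avgE Q T g x = (\<Sum>\<xi>\<in>?X. \<Sum>z\<in>Grp Q. g z * (cnj (echar Q \<xi> z) * echar Q \<xi> x) / ?N)"
    unfolding avgE_def fourier_def sum_divide_distrib sum_distrib_right by (simp add: mult_ac)
  also have "\<dots> = (\<Sum>z\<in>Grp Q. g z * (\<Sum>\<xi>\<in>?X. cnj (echar Q \<xi> z) * echar Q \<xi> x) / ?N)"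
    by (subst sum.swap) (simp add: sum_divide_distrib sum_distrib_left)
  also have "\<dots> = (\<Sum>z\<in>Grp Q. if \<forall>q\<in>Q-T. z q = x q then g z * (of_nat (\<Prod>(Q-T)) / ?N) else 0)"
    by (intro sum.cong) (simp_all add: sum_echar_vanishing_on[OF fin pos TQ x])
  also have "\<dots> = (\<Sum>z\<in>{z\<in>Grp Q. \<forall>q\<in>Q-T. z q = x q}. g z) * (of_nat (\<Prod>(Q-T)) / ?N)"
    by (simp add: sum.inter_filter[OF finite_Grp[OF fin], symmetric] sum_distrib_right sum_divide_distrib)
  also have "of_nat (\<Prod>(Q-T)) / ?N = 1 / of_nat (\<Prod>T)"
  proof -
    have "\<Prod>Q = \<Prod>(Q-T) * \<Prod>T" using prod.subset_diff[OF TQ fin, of id] by simp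
    moreover have "\<Prod>(Q-T) \<noteq> 0" "\<Prod>T \<noteq> 0" using pos TQ fin
      by (auto simp: finite_subset)
    ultimately show ?thesis unfolding card_Grp[OF fin] by (simp add: field_simps del: of_nat_prod)
  qed
  finally show ?thesis by simp
qed

lemma proj_in_Grp: "\<forall>q\<in>R. q > 0 \<Longrightarrow> proj R x \<in> Grp R"
  unfolding proj_def Grp_def by (auto simp: PiE_iff nat_less_iff)

lemma proj_eq_iff:
  assumes "g \<in> Grp R"
  shows "proj R x = g \<longleftrightarrow> (\<forall>q\<in>R. nat (x mod int q) = g q)"
  using assms unfolding proj_def Grp_def by (auto simp: PiE_iff extensional_def fun_eq_iff)

lemma proj_eq_proj_iff_cong:
  assumes fin: "finite R" and pos: "\<forall>q\<in>R. q > 0"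
    and cop: "pairwise coprime R"
  shows "proj R x = proj R y \<longleftrightarrow> [x = y] (mod int (\<Prod>R))"
proof -
  have "proj R x = proj R y \<longleftrightarrow> (\<forall>q\<in>R. [x = y] (mod int q))"
    using proj_eq_iff[OF proj_in_Grp[OF pos], of x y] pos
    by (auto simp: proj_def cong_def nat_eq_iff2)
  also have "\<dots> \<longleftrightarrow> [x = y] (mod (\<Prod>q\<in>R. int q))"
  proof
    assume "\<forall>q\<in>R. [x = y] (mod int q)"
    thus "[x = y] (mod (\<Prod>q\<in>R. int q))"
      using cop by (intro cong_cong_prod_coprime) (auto simp: pairwise_def)
  next
    assume "[x = y] (mod (\<Prod>q\<in>R. int q))"
    thus "\<forall>q\<in>R. [x = y] (mod int q)"
      using fin by (auto elim: cong_dvd_modulus)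
  qed
  finally show ?thesis by simp
qed

lemma proj_surj_Grp:
  assumes "finite R" "pairwise coprime R" "g \<in> Grp R"
  obtains c :: int where "proj R c = g"
proof -
  obtain c :: nat where c: "\<forall>q\<in>R. [c = g q] (mod q)"
    using chinese_remainder_nat[of R "\<lambda>q. q" g] assms(1,2) by (auto simp: pairwise_def)
  have "g q < q" if "q \<in> R" for q
    using assms(3) that unfolding Grp_def by auto
  hence "proj R (int c) = g"
    using c assms(3) by (auto simp: proj_eq_iff cong_def simp flip: of_nat_mod)
  thus thesis by (rule that)
qed

lemma proj_fibre_eq_cong_class:
  assumes "finite R" "\<forall>q\<in>R. q > 0" "pairwise coprime R" "g \<in> Grp R"
  obtains c :: int where "\<And>x. proj R x = g \<longleftrightarrow> [x = c] (mod int (\<Prod>R))"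
proof -
  obtain c where "proj R c = g" using proj_surj_Grp[OF assms(1,3,4)] .
  thus thesis by (intro that) (auto simp: proj_eq_proj_iff_cong[OF assms(1-3)])
qed

lemma inj_on_proj:
  assumes "finite R" "\<forall>q\<in>R. q > 0" "pairwise coprime R"
    and A: "A \<subseteq> {x. 1 \<le> x \<and> real_of_int x \<le> X}" and X: "X \<le> real (\<Prod>R)"
  shows "inj_on (proj R) A"
proof (rule inj_onI)
  have range: "0 \<le> z - 1 \<and> z - 1 < int (\<Prod>R)" if "z \<in> A" for z
  proof -
    have "real_of_int z \<le> real_of_int (int (\<Prod>R))" using that A X by auto
    hence "z \<le> int (\<Prod>R)" by (simp only: of_int_le_iff)
    thus ?thesis using that A by auto
  qed
  fix x y assume "x \<in> A" "y \<in> A" "proj R x = proj R y"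
  hence "[x - 1 = y - 1] (mod int (\<Prod>R))"
    using proj_eq_proj_iff_cong[OF assms(1-3)] cong_diff by blast
  hence "x - 1 = y - 1"
    using range[OF \<open>x \<in> A\<close>] range[OF \<open>y \<in> A\<close>] by (intro cong_less_imp_eq_int) auto
  thus "x = y" by simp
qed

lemma lift_eq_fibre_sum:
  assumes "inj_on (proj R) P"
  shows "lift P R f g =
    of_real (real (card (Grp R)) / real (card P)) * (\<Sum>x\<in>{x\<in>P. proj R x = g}. f x)"
proof (cases "\<exists>x\<in>P. proj R x = g")
  case True
  then obtain x where x: "x \<in> P" "proj R x = g" by blast
  hence "{x\<in>P. proj R x = g} = {x}" using assms by (auto dest: inj_onD)
  moreover have "(THE x'. x' \<in> P \<and> proj R x' = g) = x"
    using x assms by (auto dest: inj_onD)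
  ultimately show ?thesis unfolding lift_def using x by auto
next
  case False
  hence "{x\<in>P. proj R x = g} = {}" by auto
  moreover have "lift P R f g = 0" unfolding lift_def using False by auto
  ultimately show ?thesis by (simp only: sum.empty mult_zero_right)
qed

lemma specialise_avgE_lift_eq_fibre_sum:
  assumes fin: "finite Q" and pos: "\<forall>q\<in>Q. q > 0" and TS: "T \<subseteq> S" and SQ: "S \<subseteq> Q"
    and a: "a \<in> Grp S" and y: "y \<in> Grp (Q - S)" and inj: "inj_on (proj Q) P"
  shows "specialise S a (avgE Q T (lift P Q f)) y =
    of_real (real (\<Prod>Q) / (real (card P) * real (\<Prod>T))) *
    (\<Sum>x\<in>{x\<in>P. proj (S - T) x = restrict a (S - T) \<and> proj (Q - S) x = y}. f x)"
proof -
  define w where "w = (\<lambda>q. if q \<in> S then a q else y q)"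
  define A where "A = {z\<in>Grp Q. \<forall>q\<in>Q-T. z q = w q}"
  have w: "w \<in> Grp Q"
    using a y SQ unfolding w_def Grp_def by (auto simp: PiE_iff extensional_def)
  have finP: "finite P"
    using inj_on_finite[OF inj _ finite_Grp[OF fin]] proj_in_Grp[OF pos] by blast
  have "restrict a (S - T) \<in> Grp (S - T)" using a unfolding Grp_def by auto
  hence fibre: "{x\<in>P. proj Q x \<in> A} =
      {x\<in>P. proj (S - T) x = restrict a (S - T) \<and> proj (Q - S) x = y}"
    using proj_in_Grp[OF pos] TS SQ
    by (auto simp: A_def w_def proj_eq_iff[OF y] proj_eq_iff) (auto simp: proj_def)
  have "(\<Sum>z\<in>A. lift P Q f z) = of_real (real (\<Prod>Q) / real (card P)) *
      (\<Sum>z\<in>A. \<Sum>x\<in>{x\<in>{x\<in>P. proj Q x \<in> A}. proj Q x = z}. f x)"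
    unfolding lift_eq_fibre_sum[OF inj] card_Grp[OF fin] sum_distrib_left
    by (intro sum.cong) (auto simp: A_def intro!: sum.cong)
  also have "\<dots> = of_real (real (\<Prod>Q) / real (card P)) * (\<Sum>x\<in>{x\<in>P. proj Q x \<in> A}. f x)"
    using finP fin by (subst sum.group) (auto simp: A_def finite_Grp)
  finally show ?thesis
    unfolding specialise_def w_def[symmetric] avgE_eq_fibre_mean[OF fin pos order.trans[OF TS SQ] w]
      A_def[symmetric] fibre[symmetric]
    by (simp add: field_simps)
qed

lemma specialise_avgE_lift_eq_scaled_lift:
  assumes fin: "finite Q" and pos: "\<forall>q\<in>Q. q > 0" and TS: "T \<subseteq> S" and SQ: "S \<subseteq> Q"
    and a: "a \<in> Grp S" and y: "y \<in> Grp (Q - S)"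
    and P': "P' = {x\<in>P. proj (S - T) x = restrict a (S - T)}" and "card P' \<noteq> 0"
    and inj: "inj_on (proj Q) P" and inj': "inj_on (proj (Q - S)) P'"
  shows "specialise S a (avgE Q T (lift P Q f)) y =
    of_real (real (\<Prod>(S - T)) * real (card P') / real (card P)) * lift P' (Q - S) f y"
proof -
  have "\<Prod>Q = \<Prod>(Q - T) * \<Prod>T"
    using prod.subset_diff[of T Q id] fin TS SQ by auto
  also have "Q - T = (S - T) \<union> (Q - S)" using TS SQ by blast
  also have "\<Prod>((S - T) \<union> (Q - S)) = \<Prod>(S - T) * \<Prod>(Q - S)"
    using fin SQ by (intro prod.union_disjoint) (auto intro: finite_subset)
  finally have "\<Prod>Q = \<Prod>T * \<Prod>(S - T) * \<Prod>(Q - S)" by simp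
  moreover have "\<Prod>T > 0" using pos TS SQ by (intro prod_pos) blast
  ultimately have factor: "real (\<Prod>Q) / (real (card P) * real (\<Prod>T)) =
      real (\<Prod>(S - T)) * real (card P') / real (card P) * (real (\<Prod>(Q - S)) / real (card P'))"
    using \<open>card P' \<noteq> 0\<close> by (simp del: of_nat_prod)
  have "{x\<in>P. proj (S - T) x = restrict a (S - T) \<and> proj (Q - S) x = y} =
      {x\<in>P'. proj (Q - S) x = y}"
    unfolding P' by blast
  hence "specialise S a (avgE Q T (lift P Q f)) y =
      of_real (real (\<Prod>Q) / (real (card P) * real (\<Prod>T))) *
      (\<Sum>x\<in>{x\<in>P'. proj (Q - S) x = y}. f x)"
    using specialise_avgE_lift_eq_fibre_sum[OF fin pos TS SQ a y inj] by simp
  also have "\<dots> = of_real (real (\<Prod>(S - T)) * real (card P') / real (card P)) * lift P' (Q - S) f y"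
    unfolding lift_eq_fibre_sum[OF inj'] card_Grp[OF finite_Diff[OF fin]] factor by simp
  finally show ?thesis .
qed

lemma card_arith_prog_set:
  fixes b d :: int
  assumes "d \<noteq> 0"
  shows "card {b + d * int k | k. k < n} = n"
proof -
  have "{b + d * int k | k. k < n} = (\<lambda>k. b + d * int k) ` {..<n}" by auto
  moreover have "inj_on (\<lambda>k. b + d * int k) {..<n}" using assms by (auto intro: inj_onI)
  ultimately show ?thesis by (simp add: card_image)
qed

lemma arith_prog_card_pos: "arith_prog P d \<Longrightarrow> card P > 0"
  unfolding arith_prog_def by (auto simp: card_arith_prog_set)

text \<open>(n + m - 1 - k0) div m is the ceiling of (n - k0) / m, the number of k < n with
  k mod m = k0.\<close>

lemma residue_class_lessThan_eq_image:
  fixes k0 m n :: nat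
  assumes "k0 < m"
  shows "{k. k < n \<and> k mod m = k0} = (\<lambda>j. k0 + m * j) ` {..<(n + m - 1 - k0) div m}"
proof -
  have index: "k0 + m * j < n \<longleftrightarrow> j < (n + m - 1 - k0) div m" for j
  proof -
    have "j < (n + m - 1 - k0) div m \<longleftrightarrow> Suc j * m \<le> n + m - 1 - k0"
      using less_eq_div_iff_mult_less_eq[of m "Suc j" "n + m - 1 - k0"] assms
      by (simp add: Suc_le_eq)
    also have "\<dots> \<longleftrightarrow> k0 + m * j < n"
      using assms by (simp add: algebra_simps, linarith)
    finally show ?thesis ..
  qed
  show ?thesis
  proof (intro set_eqI iffI)
    fix k assume "k \<in> {k. k < n \<and> k mod m = k0}"
    hence "k < n" and k_eq: "k = k0 + m * (k div m)"
      using div_mult_mod_eq[of k m] by (auto simp: mult.commute)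
    hence "k div m < (n + m - 1 - k0) div m" using index[of "k div m"] by linarith
    thus "k \<in> (\<lambda>j. k0 + m * j) ` {..<(n + m - 1 - k0) div m}"
      by (intro image_eqI[where f = "\<lambda>j. k0 + m * j" and x = "k div m", OF k_eq]) simp
  next
    fix k assume "k \<in> (\<lambda>j. k0 + m * j) ` {..<(n + m - 1 - k0) div m}"
    then obtain j where "j < (n + m - 1 - k0) div m" "k = k0 + m * j" by blast
    thus "k \<in> {k. k < n \<and> k mod m = k0}" using index[of j] assms by simp
  qed
qed

lemma residue_class_count_estimate:
  fixes k0 m n :: nat
  assumes "k0 < m"
  shows "\<bar>real m * real ((n + m - 1 - k0) div m) - real n\<bar> < real m"
proof -
  define N where "N = n + m - 1 - k0"
  have "m * (N div m) + N mod m = N" "N mod m < m" using assms by simp_all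
  hence "m * (N div m) \<le> N" "N < m * (N div m) + m" by linarith+
  moreover have "N + k0 + 1 = n + m" using assms unfolding N_def by simp
  ultimately have "m * (N div m) + 1 \<le> n + m" "n < m * (N div m) + m" using assms by linarith+
  hence "real m * real (N div m) < real n + real m" "real n < real m * real (N div m) + real m"
    by (simp_all flip: of_nat_mult of_nat_add)
  thus ?thesis unfolding N_def by (simp add: abs_less_iff)
qed

lemma arith_prog_index_cong_iff:
  fixes b c d :: int and m :: nat
  assumes "coprime d (int m)" "m > 0"
  obtains k0 where "k0 < m" "\<And>k. [b + d * int k = c] (mod int m) \<longleftrightarrow> k mod m = k0"
proof -
  obtain e where e: "[d * e = 1] (mod int m)" using cong_solve_coprime_int[OF assms(1)] by auto
  define k0 where "k0 = nat ((e * (c - b)) mod int m)"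
  have k0: "int k0 = (e * (c - b)) mod int m" unfolding k0_def using assms(2) by simp
  have "[b + d * int k = c] (mod int m) \<longleftrightarrow> k mod m = k0" for k
  proof -
    have "[d * (e * (c - b)) = c - b] (mod int m)"
      using cong_mult[OF e cong_refl[of "c - b"]] by (simp add: mult.assoc)
    hence "[b + d * int k = c] (mod int m) \<longleftrightarrow> [d * int k = d * (e * (c - b))] (mod int m)"
      by (metis (no_types, lifting) add.commute cong_add_lcancel cong_sym cong_trans diff_add_cancel)
    also have "\<dots> \<longleftrightarrow> [int k = e * (c - b)] (mod int m)"
      using assms(1) by (rule cong_mult_lcancel)
    also have "\<dots> \<longleftrightarrow> k mod m = k0"
      unfolding cong_def k0[symmetric] by (simp flip: of_nat_mod)
    finally show ?thesis .
  qed
  moreover have "k0 < m" using k0 assms(2) by (metis of_nat_less_iff pos_mod_bound of_nat_0_less_iff)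
  ultimately show thesis using that by blast
qed

lemma arith_prog_restrict_residue_class:
  fixes c d :: int and m :: nat
  assumes P: "arith_prog P d" and cop: "coprime d (int m)" and m: "0 < m" "m \<le> card P"
  defines "P' \<equiv> {x\<in>P. [x = c] (mod int m)}"
  shows "arith_prog P' (d * int m)" and "\<bar>real m * real (card P') - real (card P)\<bar> < real m"
proof -
  obtain b n where d: "d > 0" and P_eq: "P = {b + d * int k | k. k < n}"
    using P unfolding arith_prog_def by blast
  have n: "card P = n" unfolding P_eq using d by (simp add: card_arith_prog_set)
  obtain k0 where k0: "k0 < m" "\<And>k. [b + d * int k = c] (mod int m) \<longleftrightarrow> k mod m = k0"
    using arith_prog_index_cong_iff[OF cop m(1)] by blast
  define n' where "n' = (n + m - 1 - k0) div m"
  have "P' = (\<lambda>k. b + d * int k) ` {k. k < n \<and> k mod m = k0}"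
    unfolding P'_def P_eq using k0(2) by auto
  also have "\<dots> = (\<lambda>j. (b + d * int k0) + (d * int m) * int j) ` {..<n'}"
    unfolding residue_class_lessThan_eq_image[OF k0(1)] n'_def image_image
    by (intro image_cong) (simp_all add: algebra_simps)
  finally have P'_eq: "P' = {(b + d * int k0) + (d * int m) * int j | j. j < n'}" by auto
  have bound: "\<bar>real m * real n' - real n\<bar> < real m"
    unfolding n'_def by (rule residue_class_count_estimate[OF k0(1)])
  hence "n' \<ge> 1" using m n by (cases n') auto
  thus "arith_prog P' (d * int m)" unfolding arith_prog_def P'_eq using d m by auto
  show "\<bar>real m * real (card P') - real (card P)\<bar> < real m"
    using bound d m by (simp add: P'_eq n card_arith_prog_set)
qed

lemma arith_prog_restrict_proj:
  assumes P: "arith_prog P d" and fin: "finite R" and pos: "\<forall>q\<in>R. q > 0"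
    and cop: "pairwise coprime R" and d: "\<forall>q\<in>R. coprime d (int q)"
    and g: "g \<in> Grp R" and R_le: "\<Prod>R \<le> card P"
  defines "P' \<equiv> {x\<in>P. proj R x = g}"
  shows "arith_prog P' (d * int (\<Prod>R))"
    and "\<bar>real (\<Prod>R) * real (card P') - real (card P)\<bar> < real (\<Prod>R)"
proof -
  obtain c where "\<And>x. proj R x = g \<longleftrightarrow> [x = c] (mod int (\<Prod>R))"
    using proj_fibre_eq_cong_class[OF fin pos cop g] by blast
  hence P': "P' = {x\<in>P. [x = c] (mod int (\<Prod>R))}" unfolding P'_def by simp
  have "coprime d (int (\<Prod>R))"
    unfolding of_nat_prod using d by (intro prod_coprime_right) auto
  moreover have "0 < \<Prod>R" using pos by (intro prod_pos) blast
  ultimately show "arith_prog P' (d * int (\<Prod>R))"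
    and "\<bar>real (\<Prod>R) * real (card P') - real (card P)\<bar> < real (\<Prod>R)"
    unfolding P' using arith_prog_restrict_residue_class[OF P _ _ R_le] by blast+
qed

lemma prod_le_Max_power:
  fixes Q S U :: "nat set"
  assumes "finite Q" "\<forall>q\<in>Q. q > 0" "U \<subseteq> S" "S \<subseteq> Q"
  shows "\<Prod>U \<le> Max Q ^ card S"
proof (cases "S = {}")
  case False
  hence "Max Q \<in> Q" using assms by (intro Max_in) auto
  hence "Max Q \<ge> 1" using assms by (simp add: Suc_le_eq)
  have "\<Prod>U \<le> (\<Prod>q\<in>U. Max Q)"
    using assms by (intro prod_mono) (auto simp: finite_subset)
  also have "\<dots> = Max Q ^ card U" by simp
  also have "\<dots> \<le> Max Q ^ card S"
    using \<open>Max Q \<ge> 1\<close> assms by (intro power_increasing card_mono) (auto simp: finite_subset)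
  finally show ?thesis .
qed (use assms in auto)

lemma prod_bounds_of_Max_power:
  fixes X :: real and Q S :: "nat set"
  assumes X: "X \<ge> 1" and fin: "finite Q" and pos: "\<forall>q\<in>Q. q > 0" and SQ: "S \<subseteq> Q"
    and Max: "real (Max Q) ^ card S \<le> X powr (1/4)" and prod: "X powr (5/4) \<le> real (\<Prod>Q)"
  shows "\<And>U. U \<subseteq> S \<Longrightarrow> real (\<Prod>U) \<le> X powr (1/4)" and "X \<le> real (\<Prod>(Q - S))"
proof -
  show prod_le: "real (\<Prod>U) \<le> X powr (1/4)" if "U \<subseteq> S" for U
    using prod_le_Max_power[OF fin pos that SQ] Max by (simp only: of_nat_le_iff flip: of_nat_power)
  have "X * X powr (1/4) \<le> real (\<Prod>Q)" using prod powr_add[of X 1 "1/4"] X by simp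
  also have "\<dots> = real (\<Prod>(Q - S)) * real (\<Prod>S)"
    using prod.subset_diff[OF SQ fin, of id] by (simp del: of_nat_prod)
  also have "\<dots> \<le> real (\<Prod>(Q - S)) * X powr (1/4)"
    using prod_le[of S] by (rule mult_left_mono) (simp_all del: of_nat_prod)
  finally show "X \<le> real (\<Prod>(Q - S))" using X by simp
qed

lemma coprime_mult_prod_outside:
  fixes d :: int and Q R :: "nat set"
  assumes "pairwise coprime Q" "\<forall>q\<in>Q. coprime d (int q)" "R \<subseteq> Q" "q \<in> Q - R"
  shows "coprime (d * int (\<Prod>R)) (int q)"
proof -
  have "coprime (\<Prod>R) q"
    using assms(1,3,4) by (intro prod_coprime_left) (auto simp: pairwise_def)
  thus ?thesis using assms(2,4) by (simp del: of_nat_prod)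
qed

lemma relative_error_le_powr:
  fixes X m n n' :: real
  assumes "X \<ge> 1" "m \<le> X powr (1/4)" "n \<ge> X powr (3/4)" "\<bar>m * n' - n\<bar> < m"
  shows "\<bar>m * n' / n - 1\<bar> \<le> X powr (-1/2)"
proof -
  have "X powr (3/4) > 0" using assms(1) by simp
  hence "n > 0" using assms(3) by linarith
  hence "\<bar>m * n' / n - 1\<bar> = \<bar>m * n' - n\<bar> / n" by (simp add: field_simps)
  also have "\<dots> \<le> X powr (1/4) / X powr (3/4)"
    using assms \<open>n > 0\<close> by (intro frac_le) auto
  also have "\<dots> = X powr (-1/2)" by (simp flip: powr_diff)
  finally show ?thesis .
qed

theorem lemma3p2:
  fixes X :: real and P :: "int set" and d :: int and Q S T :: "nat set" and a :: "nat \<Rightarrow> nat"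
  assumes X: "X \<ge> 1"
    and P_sub: "P \<subseteq> {x. 1 \<le> x \<and> real_of_int x \<le> X}"
    and P_ap: "arith_prog P d"
    and P_len: "real (card P) \<ge> X powr (3/4)"
    and Q_fin: "finite Q"
    and Q_pos: "\<forall>q\<in>Q. q > 0"
    and Q_cop: "\<forall>q\<in>Q. \<forall>r\<in>Q. q \<noteq> r \<longrightarrow> coprime q r"
    and Q_prod: "real (\<Prod>Q) \<ge> X powr (5/4)"
    and d_cop: "\<forall>q\<in>Q. coprime d (int q)"
    and S_sub: "S \<subseteq> Q"
    and S_size: "real (Max Q) ^ card S \<le> X powr (1/4)"
    and T_sub: "T \<subseteq> S"
    and a_in: "a \<in> Grp S"
  shows "(P' = {x\<in>P. proj (S - T) x = restrict a (S - T)} \<and> Q' = Q - S) \<longrightarrow>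
      (P' \<subseteq> {x. 1 \<le> x \<and> real_of_int x \<le> X}
       \<and> (\<exists>d'. arith_prog P' d' \<and> (\<forall>q\<in>Q'. coprime d' (int q)))
       \<and> real (\<Prod>Q') \<ge> X
       \<and> inj_on (proj Q') P')
    \<and> (\<exists>\<eta>::real. \<bar>\<eta>\<bar> \<le> X powr (-1/2) \<and>
         (\<forall>f::int \<Rightarrow> complex. \<forall>y\<in>Grp Q'.
            specialise S a (avgE Q T (lift P Q f)) y = (1 + of_real \<eta>) * lift P' Q' f y))"
proof (intro impI, goal_cases)
  case 1
  hence P': "P' = {x\<in>P. proj (S - T) x = restrict a (S - T)}" and Q': "Q' = Q - S" by auto
  define m where "m = \<Prod>(S - T)"
  have cop: "pairwise coprime Q" using Q_cop by (simp add: pairwise_def)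
  have "S - T \<subseteq> Q" "Q' \<subseteq> Q" using S_sub Q' by auto
  hence fin: "finite (S - T)" "finite Q'" and pos: "\<forall>q\<in>S - T. q > 0" "\<forall>q\<in>Q'. q > 0"
    and cop_sub: "pairwise coprime (S - T)" "pairwise coprime Q'"
    using Q_fin Q_pos cop by (auto intro: finite_subset pairwise_subset)
  have m_le: "real m \<le> X powr (1/4)" and Q'_ge: "X \<le> real (\<Prod>Q')"
    using prod_bounds_of_Max_power[OF X Q_fin Q_pos S_sub S_size Q_prod] Q' unfolding m_def by auto
  have "X powr (1/4) \<le> X powr (3/4)" using X by (intro powr_mono) auto
  hence "m \<le> card P" using m_le P_len by linarith
  moreover have "restrict a (S - T) \<in> Grp (S - T)" using a_in unfolding Grp_def by auto
  moreover have "\<forall>q\<in>S - T. coprime d (int q)" using d_cop S_sub by auto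
  ultimately have AP': "arith_prog P' (d * int m)"
    and card_P': "\<bar>real m * real (card P') - real (card P)\<bar> < real m"
    using arith_prog_restrict_proj[OF P_ap fin(1) pos(1) cop_sub(1)] unfolding P' m_def by blast+
  have cop': "\<forall>q\<in>Q'. coprime (d * int m) (int q)"
    using coprime_mult_prod_outside[OF cop d_cop] S_sub Q' unfolding m_def by blast
  have "X powr 1 \<le> X powr (5/4)" using X by (intro powr_mono) auto
  hence inj_P: "inj_on (proj Q) P" using inj_on_proj[OF Q_fin Q_pos cop P_sub] Q_prod X by simp
  have "P' \<subseteq> {x. 1 \<le> x \<and> real_of_int x \<le> X}" using P_sub P' by blast
  hence inj_P': "inj_on (proj Q') P'" using Q'_ge by (rule inj_on_proj[OF fin(2) pos(2) cop_sub(2)])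
  define \<eta> where "\<eta> = real m * real (card P') / real (card P) - 1"
  have "\<bar>\<eta>\<bar> \<le> X powr (-1/2)"
    unfolding \<eta>_def by (rule relative_error_le_powr[OF X m_le P_len card_P'])
  moreover have "specialise S a (avgE Q T (lift P Q f)) y = (1 + of_real \<eta>) * lift P' Q' f y"
    if "y \<in> Grp Q'" for f y
    using specialise_avgE_lift_eq_scaled_lift[OF Q_fin Q_pos T_sub S_sub a_in _ P' _ inj_P] that
      arith_prog_card_pos[OF AP'] inj_P' Q' unfolding \<eta>_def m_def by simp
  ultimately show ?case using P' P_sub AP' cop' Q'_ge inj_P' by blast
qed

end
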